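(* Let $d\ge2$, let $p_1,\dots,p_{d+1}$ be the vertices of a regular $d$-simplex inscribed in the unit sphere centered at the origin, and for each $i$ let $q_i$ be the point on the ray from the origin through the circumcenter of the facet opposite $p_i$ at distance $\rho>20d$ from the origin. Let $\mathcal Q=\{p_1,\dots,p_{d+1},q_1,\dots,q_{d+1}\}$, $\mathcal D(\mathcal Q)$ its Delaunay complex and $\mathring{\mathcal D}(\mathcal Q)=\mathcal D(\mathcal Q\cup\{\mathbf 0\})$. Then: (1) $\mathring{\mathcal D}(\mathcal Q)\setminus\mathcal D(\mathcal Q)$ consists of at most $2^{d+1}$ simplices, whose maximum weight is $d/2$ and minimum weight is $1/2$; (2) $\mathcal D(\mathcal Q)\setminus\mathring{\mathcal D}(\mathcal Q)$ consists of a single $d$-simplex, of weight $1$.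
   Context: For a finite set $\mathcal X\subset\mathbb{R}^d$, $\mathrm{Vor}_{\mathcal X}(x)=\{y:|y-x|\le|y-x'|\ \forall x'\in\mathcal X\}$; the Delaunay complex $\mathcal D(\mathcal X)$ consists of all $[x_0,\dots,x_k]$ with $\bigcap_i\mathrm{Vor}_{\mathcal X}(x_i)\ne\emptyset$, with weight $w([x_0,\dots,x_k])=\inf\{s:\bigcap_i(B_s(x_i)\cap\mathrm{Vor}_{\mathcal X}(x_i))\ne\emptyset\}$, computed in the complex containing the simplex. *)

theory Defs
  imports "HOL-Analysis.Analysis"
begin

definition voronoi :: "('a::metric_space) set \<Rightarrow> 'a \<Rightarrow> 'a set" where
  "voronoi X x = {y. \<forall>x'\<in>X. dist y x \<le> dist y x'}"

definition delaunay :: "('a::metric_space) set \<Rightarrow> 'a set set" where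
  "delaunay X = {\<sigma>. \<sigma> \<noteq> {} \<and> \<sigma> \<subseteq> X \<and> (\<Inter>x\<in>\<sigma>. voronoi X x) \<noteq> {}}"

definition del_weight :: "('a::metric_space) set \<Rightarrow> 'a set \<Rightarrow> real" where
  "del_weight X \<sigma> = Inf {s. (\<Inter>x\<in>\<sigma>. cball x s \<inter> voronoi X x) \<noteq> {}}"

definition regular_simplex_unit_sphere :: "(real ^ 'n) set \<Rightarrow> bool" where
  "regular_simplex_unit_sphere P \<longleftrightarrow>
     card P = CARD('n) + 1 \<and> \<not> affine_dependent P \<and> P \<subseteq> sphere 0 1 \<and>
     (\<exists>a. \<forall>x\<in>P. \<forall>y\<in>P. x \<noteq> y \<longrightarrow> dist x y = a)"

definition circumcenter :: "('a::euclidean_space) set \<Rightarrow> 'a" where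
  "circumcenter S = (THE c. c \<in> affine hull S \<and> (\<exists>r. \<forall>x\<in>S. dist c x = r))"

definition ray_point :: "real \<Rightarrow> ('a::euclidean_space) set \<Rightarrow> 'a \<Rightarrow> 'a" where
  "ray_point \<rho> P p = (let c = circumcenter (P - {p}) in (\<rho> / norm c) *\<^sub>R c)"

end

theory Submission
  imports Defs
begin

text \<open>Write \<open>d\<close> for the dimension. The facet circumcenters of the regular simplex are \<open>-p\<^sub>i/d\<close>,
  so \<open>q\<^sub>i = -\<rho> p\<^sub>i\<close>, and \<open>\<Sum>\<^sub>i p\<^sub>i = 0\<close>. Measuring the squared distance from \<open>y\<close> relative to
  \<open>\<parallel>y\<parallel>\<^sup>2\<close> makes every Voronoi inequality linear in \<open>y\<close>. The cell of the origin lies in the slab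
  \<open>-d/2 \<le> y \<bullet> p\<^sub>i \<le> 1/2\<close>, which keeps it away from every \<open>q\<^sub>i\<close> once \<open>\<rho> > d + 1\<close>; hence a
  simplex that appears or disappears when the origin is added consists of vertices \<open>p\<^sub>i\<close> and
  possibly the origin. The point \<open>-(d/2) p\<^sub>j\<close> is at distance \<open>d/2\<close> from \<open>0\<close> and from every \<open>p\<^sub>i\<close>,
  \<open>i \<noteq> j\<close>, and no closer to any other point, so every \<open>{0} \<union> S\<close> with \<open>S \<subset> P\<close> is Delaunay; \<open>P\<close>
  itself no longer is, since \<open>\<Sum>\<^sub>i y \<bullet> p\<^sub>i = 0\<close> forbids \<open>y \<bullet> p\<^sub>i \<ge> 1/2\<close> for all \<open>i\<close>, while without
  the origin the cells of \<open>P\<close> meet at \<open>0\<close>. A common point of the cells of \<open>0\<close> and \<open>p\<^sub>i\<close> has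
  \<open>y \<bullet> p\<^sub>i = 1/2\<close>, so its norm is at least \<open>1/2\<close>; on the facet opposite \<open>p\<^sub>j\<close> also
  \<open>y \<bullet> p\<^sub>j = -d/2\<close>, so its norm is at least \<open>d/2\<close>. The points \<open>p\<^sub>i/2\<close> and \<open>-(d/2) p\<^sub>j\<close> attain
  these bounds.\<close>

section \<open>Voronoi cells and Delaunay weights in inner product spaces\<close>

definition dist_sq_offset :: "'a::real_inner \<Rightarrow> 'a \<Rightarrow> real" where
  "dist_sq_offset y x = (dist y x)\<^sup>2 - (norm y)\<^sup>2"

lemma dist_sq_offset_eq: "dist_sq_offset y x = x \<bullet> x - 2 * (y \<bullet> x)"
  unfolding dist_sq_offset_def dist_norm power2_norm_eq_inner
  by (simp add: inner_diff_left inner_diff_right inner_commute)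

lemma dist_sq_offset_0 [simp]: "dist_sq_offset y 0 = 0"
  by (simp add: dist_sq_offset_def)

lemma dist_le_iff_dist_sq_offset_le:
  "dist y x \<le> dist y x' \<longleftrightarrow> dist_sq_offset y x \<le> dist_sq_offset y x'"
  unfolding dist_sq_offset_def by (simp add: abs_le_square_iff[symmetric])

lemma mem_voronoi_iff:
  "y \<in> voronoi X x \<longleftrightarrow> (\<forall>x'\<in>X. dist_sq_offset y x \<le> dist_sq_offset y x')"
  unfolding voronoi_def by (simp add: dist_le_iff_dist_sq_offset_le)

lemma mem_voronoiD: "y \<in> voronoi X x \<Longrightarrow> x' \<in> X \<Longrightarrow> dist_sq_offset y x \<le> dist_sq_offset y x'"
  by (simp add: mem_voronoi_iff)

lemma mem_cball_voronoi_if_dist_sq_offset_eq_0: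
  assumes "y \<in> voronoi X 0" and "dist_sq_offset y x = 0" and "norm y = r"
  shows "y \<in> cball x r \<inter> voronoi X x"
proof -
  have "(dist x y)\<^sup>2 = (norm y)\<^sup>2"
    using assms(2) by (simp add: dist_sq_offset_def dist_commute)
  then have "dist x y = r"
    using assms(3) norm_ge_zero[of y] by (simp add: power2_eq_iff_nonneg)
  moreover have "y \<in> voronoi X x"
    using assms(1,2) by (simp add: mem_voronoi_iff)
  ultimately show ?thesis
    by simp
qed

lemma inner_eq_if_mem_voronoi_0:
  fixes y x :: "'a::real_inner"
  assumes "0 \<in> X" "x \<in> X" "y \<in> voronoi X 0" "y \<in> voronoi X x"
  shows "2 * (y \<bullet> x) = x \<bullet> x"
  using mem_voronoiD[OF assms(3,2)] mem_voronoiD[OF assms(4,1)] by (simp add: dist_sq_offset_eq)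

lemma voronoi_antimono: "A \<subseteq> B \<Longrightarrow> voronoi B x \<subseteq> voronoi A x"
  unfolding voronoi_def by auto

lemma delaunay_subset_closed:
  assumes "\<tau> \<in> delaunay X" "\<sigma> \<subseteq> \<tau>" "\<sigma> \<noteq> {}"
  shows "\<sigma> \<in> delaunay X"
  using assms unfolding delaunay_def by blast

lemma mem_delaunay_insert_diff:
  assumes "\<sigma> \<in> delaunay (insert z X) - delaunay X"
  shows "z \<in> \<sigma>"
proof (rule ccontr)
  assume "z \<notin> \<sigma>"
  with assms have "\<sigma> \<subseteq> X"
    by (auto simp: delaunay_def)
  moreover have "(\<Inter>x\<in>\<sigma>. voronoi (insert z X) x) \<subseteq> (\<Inter>x\<in>\<sigma>. voronoi X x)"
    using voronoi_antimono[of X "insert z X"] by blast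
  ultimately have "\<sigma> \<in> delaunay X"
    using assms by (auto simp: delaunay_def)
  with assms show False
    by simp
qed

lemma mem_voronoi_insert_if_notin_delaunay_insert:
  assumes "\<sigma> \<in> delaunay X - delaunay (insert z X)" and "y \<in> (\<Inter>x\<in>\<sigma>. voronoi X x)"
  shows "y \<in> voronoi (insert z X) z"
proof -
  from assms(1) have sub: "\<sigma> \<subseteq> X" and "\<sigma> \<noteq> {}"
    by (auto simp: delaunay_def)
  then obtain x0 where x0: "x0 \<in> \<sigma>"
    by blast
  have nearest: "dist y x0 \<le> dist y x'" if "x' \<in> X" for x'
    using assms(2) x0 that unfolding voronoi_def by blast
  have "dist y z < dist y x0"
  proof (rule ccontr)
    assume far: "\<not> dist y z < dist y x0"
    have "y \<in> voronoi (insert z X) x" if "x \<in> \<sigma>" for x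
    proof -
      have "y \<in> voronoi X x"
        using assms(2) that by blast
      then have "dist y x \<le> dist y x0"
        using x0 sub unfolding voronoi_def by blast
      with \<open>y \<in> voronoi X x\<close> far show ?thesis
        unfolding voronoi_def by auto
    qed
    then have "\<sigma> \<in> delaunay (insert z X)"
      using sub \<open>\<sigma> \<noteq> {}\<close> unfolding delaunay_def by blast
    with assms(1) show False
      by simp
  qed
  with nearest show ?thesis
    unfolding voronoi_def by force
qed

lemma del_weight_between:
  assumes "y \<in> (\<Inter>x\<in>\<sigma>. cball x t \<inter> voronoi X x)"
    and "\<And>y. y \<in> (\<Inter>x\<in>\<sigma>. voronoi X x) \<Longrightarrow> \<exists>x\<in>\<sigma>. s \<le> dist x y"
  shows "s \<le> del_weight X \<sigma> \<and> del_weight X \<sigma> \<le> t"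
proof -
  let ?W = "{r. (\<Inter>x\<in>\<sigma>. cball x r \<inter> voronoi X x) \<noteq> {}}"
  have lower: "s \<le> r" if "r \<in> ?W" for r
  proof -
    from that obtain y' where y': "y' \<in> (\<Inter>x\<in>\<sigma>. cball x r \<inter> voronoi X x)"
      by blast
    with assms(2) obtain x where "x \<in> \<sigma>" "s \<le> dist x y'"
      by blast
    with y' show ?thesis
      by auto
  qed
  have "t \<in> ?W"
    using assms(1) by blast
  moreover have "bdd_below ?W"
    using lower by (rule bdd_belowI)
  ultimately show ?thesis
    unfolding del_weight_def using cInf_greatest[of ?W s] lower cInf_lower[of t ?W] by blast
qed

lemma del_weight_eqI:
  assumes "y \<in> (\<Inter>x\<in>\<sigma>. cball x s \<inter> voronoi X x)"
    and "\<And>y. y \<in> (\<Inter>x\<in>\<sigma>. voronoi X x) \<Longrightarrow> \<exists>x\<in>\<sigma>. s \<le> dist x y"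
  shows "del_weight X \<sigma> = s"
  using del_weight_between[OF assms] by simp

section \<open>Regular simplices inscribed in the unit sphere\<close>

lemma inner_const_on_affine_hull:
  assumes "\<And>x. x \<in> S \<Longrightarrow> v \<bullet> x = k" and "z \<in> affine hull S"
  shows "v \<bullet> z = k"
proof -
  have "affine hull S \<subseteq> {x. v \<bullet> x = k}"
    by (rule hull_minimal) (use assms(1) affine_hyperplane in auto)
  with assms(2) show ?thesis
    by auto
qed

lemma circumcenter_eqI:
  fixes c :: "'a::euclidean_space"
  assumes "c \<in> affine hull S" and "\<And>x. x \<in> S \<Longrightarrow> dist c x = r"
  shows "circumcenter S = c"
  unfolding circumcenter_def
proof (rule the_equality)
  show "c \<in> affine hull S \<and> (\<exists>r. \<forall>x\<in>S. dist c x = r)"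
    using assms by blast
next
  fix c' assume "c' \<in> affine hull S \<and> (\<exists>r. \<forall>x\<in>S. dist c' x = r)"
  then obtain r' where c': "c' \<in> affine hull S" "\<And>x. x \<in> S \<Longrightarrow> dist c' x = r'"
    by blast
  define k where "k = (c \<bullet> c - c' \<bullet> c' - r\<^sup>2 + r'\<^sup>2) / 2"
  have sq: "(dist a x)\<^sup>2 = a \<bullet> a - 2 * (a \<bullet> x) + x \<bullet> x" for a x :: 'a
    unfolding dist_norm power2_norm_eq_inner
    by (simp add: inner_diff_left inner_diff_right inner_commute)
  have "(c - c') \<bullet> x = k" if "x \<in> S" for x
    using sq[of c x] sq[of c' x] assms(2)[OF that] c'(2)[OF that]
    by (simp add: k_def inner_diff_left)
  then have "(c - c') \<bullet> c = k" "(c - c') \<bullet> c' = k"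
    using inner_const_on_affine_hull assms(1) c'(1) by blast+
  then have "(c - c') \<bullet> (c - c') = 0"
    by (simp add: inner_diff_right)
  then show "c' = c"
    by simp
qed

locale regular_unit_simplex =
  fixes P :: "(real ^ 'n) set"
  assumes regular: "regular_simplex_unit_sphere P"
begin

lemma card_vertices: "card P = CARD('n) + 1"
  using regular by (simp add: regular_simplex_unit_sphere_def)

lemma finite_vertices: "finite P"
  using card_vertices by (intro card_ge_0_finite) simp

lemma norm_vertex: "p \<in> P \<Longrightarrow> norm p = 1"
  using regular by (auto simp: regular_simplex_unit_sphere_def)

lemma inner_self_vertex: "p \<in> P \<Longrightarrow> p \<bullet> p = 1"
  using norm_vertex by (simp add: norm_eq_1)

lemma zero_notin_vertices: "0 \<notin> P"
  using norm_vertex[of 0] by auto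

lemma abs_inner_vertices_le: "p \<in> P \<Longrightarrow> p' \<in> P \<Longrightarrow> \<bar>p \<bullet> p'\<bar> \<le> 1"
  using Cauchy_Schwarz_ineq2[of p p'] by (simp add: norm_vertex)

text \<open>The sum \<open>g\<close> of the vertices has the same inner product \<open>1 + d c\<close> with every vertex, where
  \<open>c\<close> is the common inner product of two distinct vertices. The vertices affinely span the space,
  so \<open>g \<bullet> z = 1 + d c\<close> for every \<open>z\<close>; this forces \<open>g = 0\<close> and \<open>c = -1/d\<close>.\<close>

lemma sum_vertices_and_inner_vertices:
  "(\<Sum>p\<in>P. p) = 0 \<and> (\<forall>p\<in>P. \<forall>p'\<in>P. p \<noteq> p' \<longrightarrow> p \<bullet> p' = -1 / real CARD('n))"
proof -
  obtain a where a: "\<forall>x\<in>P. \<forall>y\<in>P. x \<noteq> y \<longrightarrow> dist x y = a"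
    using regular by (auto simp: regular_simplex_unit_sphere_def)
  define c where "c = 1 - a\<^sup>2 / 2"
  have inner_c: "x \<bullet> y = c" if "x \<in> P" "y \<in> P" "x \<noteq> y" for x y
  proof -
    have "a = norm (x - y)"
      using a that by (simp add: dist_norm)
    then have "a\<^sup>2 = (x - y) \<bullet> (x - y)"
      by (simp add: power2_norm_eq_inner)
    also have "\<dots> = 2 - 2 * (x \<bullet> y)"
      using that by (simp add: inner_diff_left inner_diff_right inner_commute inner_self_vertex)
    finally show ?thesis
      unfolding c_def by linarith
  qed
  define g where "g = (\<Sum>p\<in>P. p)"
  have g_vertex: "g \<bullet> p = 1 + real CARD('n) * c" if "p \<in> P" for p
  proof -
    have "g \<bullet> p = p \<bullet> p + (\<Sum>q\<in>P - {p}. q \<bullet> p)"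
      by (simp add: g_def inner_add_left inner_sum_left sum.remove[OF finite_vertices that])
    also have "(\<Sum>q\<in>P - {p}. q \<bullet> p) = (\<Sum>q\<in>P - {p}. c)"
      using that inner_c by (intro sum.cong) auto
    finally show ?thesis
      using that by (simp add: inner_self_vertex card_vertices finite_vertices)
  qed
  have "affine hull P = UNIV"
    using regular by (intro affine_independent_span_eq) (auto simp: regular_simplex_unit_sphere_def)
  then have g_inner: "g \<bullet> z = 1 + real CARD('n) * c" for z
    using inner_const_on_affine_hull[OF g_vertex] by simp
  have c_eq: "1 + real CARD('n) * c = 0"
    using g_inner[of 0] by simp
  then have "g = 0"
    using g_inner[of g] by simp
  moreover have "c = -1 / real CARD('n)"
    using c_eq by (simp add: field_simps)
  ultimately show ?thesis
    using inner_c by (simp add: g_def)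
qed

lemma sum_vertices: "(\<Sum>p\<in>P. p) = 0"
  using sum_vertices_and_inner_vertices by blast

lemma inner_vertices: "p \<in> P \<Longrightarrow> p' \<in> P \<Longrightarrow> p \<noteq> p' \<Longrightarrow> p \<bullet> p' = -1 / real CARD('n)"
  using sum_vertices_and_inner_vertices by blast

lemma sum_inner_vertices: "(\<Sum>p\<in>P. y \<bullet> p) = 0"
  by (simp add: inner_sum_right[symmetric] sum_vertices)

lemma sum_inner_facet: "p \<in> P \<Longrightarrow> (\<Sum>p'\<in>P - {p}. y \<bullet> p') = - (y \<bullet> p)"
  using sum.remove[OF finite_vertices, of p "\<lambda>p. y \<bullet> p"] sum_inner_vertices by simp

lemma ex_vertex_inner_nonpos: "\<exists>p\<in>P. y \<bullet> p \<le> 0"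
proof (rule ccontr)
  assume "\<not> ?thesis"
  moreover have "P \<noteq> {}"
    using card_vertices by auto
  ultimately have "0 < (\<Sum>p\<in>P. y \<bullet> p)"
    using finite_vertices by (intro sum_pos) auto
  then show False
    by (simp add: sum_inner_vertices)
qed

lemma circumcenter_facet:
  assumes "p \<in> P"
  shows "circumcenter (P - {p}) = (-1 / real CARD('n)) *\<^sub>R p"
proof (rule circumcenter_eqI[where r = "sqrt (1 - 1 / (real CARD('n))\<^sup>2)"])
  have "p + (\<Sum>v\<in>P - {p}. v) = 0"
    using sum.remove[OF finite_vertices assms, of "\<lambda>v. v"] sum_vertices by simp
  then have "(\<Sum>v\<in>P - {p}. v) = - p"
    by (metis neg_eq_iff_add_eq_0)
  then have "(\<Sum>v\<in>P - {p}. (1 / real CARD('n)) *\<^sub>R v) = (-1 / real CARD('n)) *\<^sub>R p"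
    by (simp add: scaleR_sum_right[symmetric])
  moreover have "(\<Sum>v\<in>P - {p}. 1 / real CARD('n)) = 1"
    using assms by (simp add: card_vertices finite_vertices)
  ultimately show "(-1 / real CARD('n)) *\<^sub>R p \<in> affine hull (P - {p})"
    unfolding affine_hull_finite[OF finite_Diff[OF finite_vertices]] mem_Collect_eq
    by (intro exI[of _ "\<lambda>_. 1 / real CARD('n)"] conjI)
next
  fix x assume x: "x \<in> P - {p}"
  let ?c = "(-1 / real CARD('n)) *\<^sub>R p"
  have "p \<bullet> x = -1 / real CARD('n)"
    using inner_vertices[OF assms, of x] x by auto
  then have "?c \<bullet> ?c - 2 * (?c \<bullet> x) + x \<bullet> x = 1 - 1 / (real CARD('n))\<^sup>2"
    using assms x by (simp add: inner_self_vertex power2_eq_square field_simps)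
  then show "dist ?c x = sqrt (1 - 1 / (real CARD('n))\<^sup>2)"
    by (simp add: dist_norm norm_eq_sqrt_inner inner_diff_left inner_diff_right inner_commute)
qed

lemma ray_point_vertex:
  assumes "p \<in> P"
  shows "ray_point \<rho> P p = - (\<rho> *\<^sub>R p)"
proof -
  have "norm ((-1 / real CARD('n)) *\<^sub>R p) = 1 / real CARD('n)"
    using assms by (simp add: norm_vertex)
  then show ?thesis
    unfolding ray_point_def Let_def circumcenter_facet[OF assms] by simp
qed

end

section \<open>The regular simplex together with the far points \<open>q\<^sub>i\<close>\<close>

locale regular_simplex_far_points = regular_unit_simplex P for P :: "(real ^ 'n) set" +
  fixes \<rho> :: real
  assumes rho_gt: "\<rho> > real CARD('n) + 1"
begin

definition Q :: "(real ^ 'n) set" where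
  "Q = P \<union> ray_point \<rho> P ` P"

lemma rho_pos: "\<rho> > 0"
  using rho_gt by simp

lemma rho_margin: "1 + real CARD('n) < \<rho> * (\<rho> - real CARD('n))"
proof -
  have "\<rho> * 1 < \<rho> * (\<rho> - real CARD('n))"
    using rho_gt by (intro mult_strict_left_mono) auto
  then show ?thesis
    using rho_gt by linarith
qed

lemma mem_Q_iff: "x \<in> Q \<longleftrightarrow> x \<in> P \<or> (\<exists>p\<in>P. x = - (\<rho> *\<^sub>R p))"
  unfolding Q_def by (auto simp: ray_point_vertex)

lemma ball_Q_iff: "(\<forall>x\<in>Q. R x) \<longleftrightarrow> (\<forall>p\<in>P. R p \<and> R (- (\<rho> *\<^sub>R p)))"
  unfolding mem_Q_iff Ball_def by blast

lemma zero_notin_Q: "0 \<notin> Q"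
proof
  assume "0 \<in> Q"
  then obtain p where "p \<in> P" "p = 0 \<or> \<rho> *\<^sub>R p = 0"
    by (auto simp: mem_Q_iff)
  then show False
    using norm_vertex[of p] rho_pos by auto
qed

lemma notin_delaunay_Q_if_0_mem: "0 \<in> \<sigma> \<Longrightarrow> \<sigma> \<notin> delaunay Q"
  using zero_notin_Q by (auto simp: delaunay_def)

lemma dist_sq_offset_vertex: "p \<in> P \<Longrightarrow> dist_sq_offset y p = 1 - 2 * (y \<bullet> p)"
  by (simp add: dist_sq_offset_eq inner_self_vertex)

lemma dist_sq_offset_far_point:
  "p \<in> P \<Longrightarrow> dist_sq_offset y (- (\<rho> *\<^sub>R p)) = \<rho>\<^sup>2 + 2 * \<rho> * (y \<bullet> p)"
  by (simp add: dist_sq_offset_eq inner_self_vertex power2_eq_square)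

lemma mem_voronoi_0_iff:
  "y \<in> voronoi (insert 0 Q) 0 \<longleftrightarrow> (\<forall>p\<in>P. - \<rho> / 2 \<le> y \<bullet> p \<and> y \<bullet> p \<le> 1 / 2)"
proof -
  have far: "0 \<le> \<rho>\<^sup>2 + 2 * \<rho> * (y \<bullet> p) \<longleftrightarrow> - \<rho> / 2 \<le> y \<bullet> p" for p
  proof -
    have "\<rho>\<^sup>2 + 2 * \<rho> * (y \<bullet> p) = 2 * \<rho> * (\<rho> / 2 + y \<bullet> p)"
      by (simp add: power2_eq_square algebra_simps)
    moreover have "0 \<le> 2 * \<rho> * (\<rho> / 2 + y \<bullet> p) \<longleftrightarrow> 0 \<le> \<rho> / 2 + y \<bullet> p"
      using rho_pos by (simp add: zero_le_mult_iff)
    ultimately show ?thesis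
      by auto
  qed
  show ?thesis
    unfolding mem_voronoi_iff ball_simps ball_Q_iff
    by (auto simp: far dist_sq_offset_vertex dist_sq_offset_far_point)
qed

lemma inner_bounds_if_mem_voronoi_0:
  assumes "y \<in> voronoi (insert 0 Q) 0" "p \<in> P"
  shows "- real CARD('n) / 2 \<le> y \<bullet> p \<and> y \<bullet> p \<le> 1 / 2"
proof -
  have upper: "y \<bullet> p' \<le> 1 / 2" if "p' \<in> P" for p'
    using assms(1) that by (simp add: mem_voronoi_0_iff)
  have "(\<Sum>p'\<in>P - {p}. y \<bullet> p') \<le> real (card (P - {p})) * (1 / 2)"
    using upper by (intro sum_bounded_above) auto
  then show ?thesis
    using assms(2) upper[OF assms(2)] by (simp add: sum_inner_facet card_vertices finite_vertices)
qed

lemma vertex_closer_than_far_point: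
  assumes "y \<in> voronoi (insert 0 Q) 0" "p \<in> P" "p' \<in> P"
  shows "dist_sq_offset y p' < dist_sq_offset y (- (\<rho> *\<^sub>R p))"
proof -
  have "\<rho> * (- real CARD('n)) \<le> \<rho> * (2 * (y \<bullet> p))"
    using inner_bounds_if_mem_voronoi_0[OF assms(1,2)] rho_pos by (intro mult_left_mono) auto
  moreover have "dist_sq_offset y p' \<le> 1 + real CARD('n)"
    using inner_bounds_if_mem_voronoi_0[OF assms(1,3)] assms(3) by (simp add: dist_sq_offset_vertex)
  ultimately show ?thesis
    using rho_margin assms(2) by (simp add: dist_sq_offset_far_point power2_eq_square algebra_simps)
qed

lemma mem_vertices_if_mem_voronoi_0:
  assumes "y \<in> voronoi (insert 0 Q) 0" "y \<in> voronoi Q x" "x \<in> Q"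
  shows "x \<in> P"
proof (rule ccontr)
  assume "x \<notin> P"
  with assms(3) obtain p where p: "p \<in> P" "x = - (\<rho> *\<^sub>R p)"
    by (auto simp: mem_Q_iff)
  then show False
    using mem_voronoiD[OF assms(2), of p] vertex_closer_than_far_point[OF assms(1) p(1) p(1)]
    by (simp add: mem_Q_iff)
qed

lemma facet_witness:
  assumes "p \<in> P" "x \<in> insert 0 (P - {p})"
  shows "(- real CARD('n) / 2) *\<^sub>R p \<in> cball x (real CARD('n) / 2) \<inter> voronoi (insert 0 Q) x"
proof (rule mem_cball_voronoi_if_dist_sq_offset_eq_0)
  let ?z = "(- real CARD('n) / 2) *\<^sub>R p"
  have "- \<rho> / 2 \<le> ?z \<bullet> p' \<and> ?z \<bullet> p' \<le> 1 / 2" if "p' \<in> P" for p'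
  proof (cases "p' = p")
    case True
    then show ?thesis
      using assms(1) rho_gt by (simp add: inner_self_vertex)
  next
    case False
    then show ?thesis
      using assms(1) that rho_gt by (simp add: inner_vertices)
  qed
  then show "?z \<in> voronoi (insert 0 Q) 0"
    by (simp add: mem_voronoi_0_iff)
  show "dist_sq_offset ?z x = 0"
    using assms by (auto simp: dist_sq_offset_vertex inner_vertices)
  show "norm ?z = real CARD('n) / 2"
    using assms(1) by (simp add: norm_vertex)
qed

lemma edge_witness:
  assumes "p \<in> P" "x \<in> {0, p}"
  shows "(1 / 2) *\<^sub>R p \<in> cball x (1 / 2) \<inter> voronoi (insert 0 Q) x"
proof (rule mem_cball_voronoi_if_dist_sq_offset_eq_0)
  let ?z = "(1 / 2 :: real) *\<^sub>R p"
  have "- \<rho> / 2 \<le> ?z \<bullet> p' \<and> ?z \<bullet> p' \<le> 1 / 2" if "p' \<in> P" for p'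
    using abs_inner_vertices_le[OF assms(1) that] rho_gt by (simp add: abs_le_iff)
  then show "?z \<in> voronoi (insert 0 Q) 0"
    by (simp add: mem_voronoi_0_iff)
  show "dist_sq_offset ?z x = 0"
    using assms by (auto simp: dist_sq_offset_vertex inner_self_vertex)
  show "norm ?z = 1 / 2"
    using assms(1) by (simp add: norm_vertex)
qed

lemma origin_witness:
  assumes "p \<in> P"
  shows "0 \<in> cball p 1 \<inter> voronoi Q p"
proof -
  have "1 \<le> \<rho>\<^sup>2"
    using rho_gt by (intro one_le_power) simp
  then have "0 \<in> voronoi Q p"
    using assms unfolding mem_voronoi_iff ball_Q_iff
    by (simp add: dist_sq_offset_vertex dist_sq_offset_far_point)
  then show ?thesis
    using assms by (simp add: norm_vertex)
qed

lemma inner_half_if_mem_voronoi_0_vertex: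
  assumes "p \<in> P" "y \<in> voronoi (insert 0 Q) 0" "y \<in> voronoi (insert 0 Q) p"
  shows "y \<bullet> p = 1 / 2"
  using inner_eq_if_mem_voronoi_0[OF _ _ assms(2,3)] assms(1)
  by (simp add: mem_Q_iff inner_self_vertex)

lemma insert_0_face_in_delaunay:
  assumes "S \<subset> P"
  shows "insert 0 S \<in> delaunay (insert 0 Q)"
proof -
  obtain p where "p \<in> P" "p \<notin> S"
    using assms by blast
  then have "(- real CARD('n) / 2) *\<^sub>R p \<in> (\<Inter>x\<in>insert 0 S. voronoi (insert 0 Q) x)"
    using facet_witness assms by blast
  moreover have "insert 0 S \<subseteq> insert 0 Q"
    using assms by (auto simp: mem_Q_iff)
  ultimately show ?thesis
    unfolding delaunay_def by blast
qed

lemma vertices_notin_delaunay_insert_0: "P \<notin> delaunay (insert 0 Q)"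
proof
  assume "P \<in> delaunay (insert 0 Q)"
  then obtain y where y: "\<And>p. p \<in> P \<Longrightarrow> y \<in> voronoi (insert 0 Q) p"
    unfolding delaunay_def by blast
  have "1 / 2 \<le> y \<bullet> p" if "p \<in> P" for p
    using mem_voronoiD[OF y[OF that], of 0] that by (simp add: dist_sq_offset_vertex)
  then show False
    using ex_vertex_inner_nonpos[of y] by fastforce
qed

lemma vertices_in_delaunay: "P \<in> delaunay Q"
proof -
  have "0 \<in> (\<Inter>p\<in>P. voronoi Q p)"
    using origin_witness by blast
  moreover have "P \<noteq> {}" "P \<subseteq> Q"
    using card_vertices by (auto simp: mem_Q_iff)
  ultimately show ?thesis
    unfolding delaunay_def by blast
qed

theorem delaunay_insert_0_diff: "delaunay (insert 0 Q) - delaunay Q = insert 0 ` {S. S \<subset> P}"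
proof
  show "delaunay (insert 0 Q) - delaunay Q \<subseteq> insert 0 ` {S. S \<subset> P}"
  proof
    fix \<sigma> assume \<sigma>: "\<sigma> \<in> delaunay (insert 0 Q) - delaunay Q"
    then have "0 \<in> \<sigma>"
      by (rule mem_delaunay_insert_diff)
    from \<sigma> obtain y where y: "\<And>x. x \<in> \<sigma> \<Longrightarrow> y \<in> voronoi (insert 0 Q) x"
      and sub: "\<sigma> \<subseteq> insert 0 Q"
      by (auto simp: delaunay_def)
    have "\<sigma> - {0} \<subseteq> P"
      using mem_vertices_if_mem_voronoi_0 y[OF \<open>0 \<in> \<sigma>\<close>] y sub voronoi_antimono[of Q "insert 0 Q"]
      by blast
    moreover have "\<sigma> - {0} \<noteq> P"
    proof
      assume "\<sigma> - {0} = P"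
      then have "1 / 2 \<le> y \<bullet> p" if "p \<in> P" for p
        using mem_voronoiD[OF y, of p 0] that by (auto simp: dist_sq_offset_vertex)
      then show False
        using ex_vertex_inner_nonpos[of y] by fastforce
    qed
    ultimately show "\<sigma> \<in> insert 0 ` {S. S \<subset> P}"
      using \<open>0 \<in> \<sigma>\<close> by (intro image_eqI[of _ _ "\<sigma> - {0}"]) auto
  qed
  show "insert 0 ` {S. S \<subset> P} \<subseteq> delaunay (insert 0 Q) - delaunay Q"
    using insert_0_face_in_delaunay notin_delaunay_Q_if_0_mem by blast
qed

theorem delaunay_diff_insert_0: "delaunay Q - delaunay (insert 0 Q) = {P}"
proof
  show "delaunay Q - delaunay (insert 0 Q) \<subseteq> {P}"
  proof
    fix \<sigma> assume \<sigma>: "\<sigma> \<in> delaunay Q - delaunay (insert 0 Q)"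
    then obtain y where y: "y \<in> (\<Inter>x\<in>\<sigma>. voronoi Q x)"
      and sub: "\<sigma> \<subseteq> Q" and "\<sigma> \<noteq> {}"
      by (auto simp: delaunay_def)
    have "y \<in> voronoi (insert 0 Q) 0"
      using mem_voronoi_insert_if_notin_delaunay_insert[OF \<sigma> y] .
    then have "\<sigma> \<subseteq> P"
      using mem_vertices_if_mem_voronoi_0 y sub by blast
    moreover have "\<not> \<sigma> \<subset> P"
    proof
      assume "\<sigma> \<subset> P"
      then have "\<sigma> \<in> delaunay (insert 0 Q)"
        using insert_0_face_in_delaunay delaunay_subset_closed \<open>\<sigma> \<noteq> {}\<close> by blast
      with \<sigma> show False
        by simp
    qed
    ultimately show "\<sigma> \<in> {P}"
      by blast
  qed
  show "{P} \<subseteq> delaunay Q - delaunay (insert 0 Q)"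
    using vertices_in_delaunay vertices_notin_delaunay_insert_0 by simp
qed

lemma card_delaunay_insert_0_diff:
  "card (delaunay (insert 0 Q) - delaunay Q) \<le> 2 ^ (CARD('n) + 1)"
proof -
  have "card (insert 0 ` {S. S \<subset> P}) \<le> card (insert 0 ` Pow P)"
    using finite_vertices by (intro card_mono) auto
  also have "\<dots> \<le> card (Pow P)"
    using finite_vertices by (intro card_image_le) simp
  finally show ?thesis
    by (simp add: delaunay_insert_0_diff card_Pow finite_vertices card_vertices)
qed

lemma del_weight_edge:
  assumes "p \<in> P"
  shows "del_weight (insert 0 Q) {0, p} = 1 / 2"
proof (rule del_weight_eqI)
  show "(1 / 2) *\<^sub>R p \<in> (\<Inter>x\<in>{0, p}. cball x (1 / 2) \<inter> voronoi (insert 0 Q) x)"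
    using edge_witness[OF assms] by blast
next
  fix y assume "y \<in> (\<Inter>x\<in>{0, p}. voronoi (insert 0 Q) x)"
  then have "y \<bullet> p = 1 / 2"
    using inner_half_if_mem_voronoi_0_vertex[OF assms] by blast
  then have "1 / 2 \<le> dist 0 y"
    using Cauchy_Schwarz_ineq2[of y p] assms by (simp add: norm_vertex)
  then show "\<exists>x\<in>{0, p}. 1 / 2 \<le> dist x y"
    by blast
qed

lemma del_weight_facet:
  assumes "p \<in> P"
  shows "del_weight (insert 0 Q) (insert 0 (P - {p})) = real CARD('n) / 2"
proof (rule del_weight_eqI)
  show "(- real CARD('n) / 2) *\<^sub>R p
      \<in> (\<Inter>x\<in>insert 0 (P - {p}). cball x (real CARD('n) / 2) \<inter> voronoi (insert 0 Q) x)"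
    using facet_witness[OF assms] by blast
next
  fix y assume y: "y \<in> (\<Inter>x\<in>insert 0 (P - {p}). voronoi (insert 0 Q) x)"
  then have "(\<Sum>p'\<in>P - {p}. y \<bullet> p') = (\<Sum>p'\<in>P - {p}. 1 / 2)"
    using inner_half_if_mem_voronoi_0_vertex by (intro sum.cong) auto
  then have "y \<bullet> p = - real CARD('n) / 2"
    using assms by (simp add: sum_inner_facet card_vertices finite_vertices)
  then have "real CARD('n) / 2 \<le> dist 0 y"
    using Cauchy_Schwarz_ineq2[of y p] assms by (simp add: norm_vertex)
  then show "\<exists>x\<in>insert 0 (P - {p}). real CARD('n) / 2 \<le> dist x y"
    by blast
qed

lemma del_weight_face_between:
  assumes "S \<subset> P" "S \<noteq> {}"
  shows "1 / 2 \<le> del_weight (insert 0 Q) (insert 0 S)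
    \<and> del_weight (insert 0 Q) (insert 0 S) \<le> real CARD('n) / 2"
proof -
  obtain p0 where "p0 \<in> P" "p0 \<notin> S"
    using assms(1) by blast
  obtain p where p: "p \<in> S"
    using assms(2) by blast
  show ?thesis
  proof (rule del_weight_between)
    show "(- real CARD('n) / 2) *\<^sub>R p0
        \<in> (\<Inter>x\<in>insert 0 S. cball x (real CARD('n) / 2) \<inter> voronoi (insert 0 Q) x)"
      using facet_witness \<open>p0 \<in> P\<close> \<open>p0 \<notin> S\<close> assms(1) by blast
  next
    fix y assume "y \<in> (\<Inter>x\<in>insert 0 S. voronoi (insert 0 Q) x)"
    then have "y \<bullet> p = 1 / 2"
      using inner_half_if_mem_voronoi_0_vertex p assms(1) by blast
    then have "1 / 2 \<le> dist 0 y"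
      using Cauchy_Schwarz_ineq2[of y p] p assms(1) by (auto simp: norm_vertex)
    then show "\<exists>x\<in>insert 0 S. 1 / 2 \<le> dist x y"
      by blast
  qed
qed

lemma del_weight_vertices: "del_weight Q P = 1"
proof (rule del_weight_eqI)
  show "0 \<in> (\<Inter>p\<in>P. cball p 1 \<inter> voronoi Q p)"
    using origin_witness by blast
next
  fix y assume y: "y \<in> (\<Inter>p\<in>P. voronoi Q p)"
  obtain p1 where p1: "p1 \<in> P"
    using card_vertices by fastforce
  have "y \<bullet> p = y \<bullet> p1" if "p \<in> P" for p
    using mem_voronoiD[of y Q p p1] mem_voronoiD[of y Q p1 p] y that p1
    by (force simp: mem_Q_iff dist_sq_offset_vertex)
  then have "(\<Sum>p\<in>P. y \<bullet> p) = (\<Sum>p\<in>P. y \<bullet> p1)"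
    by (intro sum.cong) auto
  then have "dist_sq_offset y p1 = 1"
    using p1 by (simp add: sum_inner_vertices card_vertices dist_sq_offset_vertex)
  then have "(dist p1 y)\<^sup>2 = 1 + (norm y)\<^sup>2"
    by (simp add: dist_sq_offset_def dist_commute)
  then have "1 \<le> dist p1 y"
    using power2_le_imp_le[of 1 "dist p1 y"] by simp
  then show "\<exists>p\<in>P. 1 \<le> dist p y"
    using p1 by blast
qed

lemma nontrivial_faces_insert_0_diff:
  "{\<sigma> \<in> delaunay (insert 0 Q) - delaunay Q. 2 \<le> card \<sigma>} = insert 0 ` {S. S \<subset> P \<and> S \<noteq> {}}"
proof -
  have "2 \<le> card (insert 0 S) \<longleftrightarrow> S \<noteq> {}" if "S \<subset> P" for S
  proof -
    have "finite S" "0 \<notin> S"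
      using that finite_vertices zero_notin_vertices by (auto intro: finite_subset)
    then show ?thesis
      by (simp add: Suc_le_eq card_gt_0_iff)
  qed
  then show ?thesis
    unfolding delaunay_insert_0_diff by auto
qed

theorem Max_Min_del_weight_insert_0_diff:
  defines "W \<equiv> del_weight (insert 0 Q) ` {\<sigma> \<in> delaunay (insert 0 Q) - delaunay Q. 2 \<le> card \<sigma>}"
  shows "Max W = real CARD('n) / 2" and "Min W = 1 / 2"
proof -
  have W: "W = (\<lambda>S. del_weight (insert 0 Q) (insert 0 S)) ` {S. S \<subset> P \<and> S \<noteq> {}}"
    unfolding W_def nontrivial_faces_insert_0_diff by (simp add: image_image)
  obtain p where p: "p \<in> P"
    using card_vertices by fastforce
  have "\<not> P \<subseteq> {p}"
    using card_mono[of "{p}" P] card_vertices by auto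
  then have faces: "{p} \<subset> P" "P - {p} \<subset> P" "P - {p} \<noteq> {}"
    using p by auto
  have "1 / 2 \<in> W"
    unfolding W by (rule image_eqI[of _ _ "{p}"]) (use del_weight_edge[OF p] faces in simp_all)
  moreover have "real CARD('n) / 2 \<in> W"
    unfolding W by (rule image_eqI[of _ _ "P - {p}"]) (use del_weight_facet[OF p] faces in simp_all)
  moreover have "1 / 2 \<le> w \<and> w \<le> real CARD('n) / 2" if "w \<in> W" for w
    using that del_weight_face_between unfolding W by auto
  moreover have "finite W"
  proof -
    have "finite {S. S \<subset> P \<and> S \<noteq> {}}"
      by (rule finite_subset[of _ "Pow P"]) (auto simp: finite_vertices)
    then show ?thesis
      unfolding W by (rule finite_imageI)
  qed
  ultimately show "Max W = real CARD('n) / 2" and "Min W = 1 / 2"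
    by (metis Max_eqI Min_eqI)+
qed

end

theorem lemma3p19:
  fixes P :: "(real ^ 'n) set" and \<rho> :: real
  assumes "CARD('n) \<ge> 2"
    and "regular_simplex_unit_sphere P"
    and "\<rho> > 20 * real CARD('n)"
  defines "Q \<equiv> P \<union> ray_point \<rho> P ` P"
  shows "card (delaunay (insert 0 Q) - delaunay Q) \<le> 2 ^ (CARD('n) + 1)
       \<and> Max (del_weight (insert 0 Q) ` {\<sigma> \<in> delaunay (insert 0 Q) - delaunay Q. card \<sigma> \<ge> 2})
           = real CARD('n) / 2
       \<and> Min (del_weight (insert 0 Q) ` {\<sigma> \<in> delaunay (insert 0 Q) - delaunay Q. card \<sigma> \<ge> 2})
           = 1 / 2
       \<and> (\<exists>\<sigma>. delaunay Q - delaunay (insert 0 Q) = {\<sigma>} \<and> card \<sigma> = CARD('n) + 1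
              \<and> del_weight Q \<sigma> = 1)"
proof -
  have "real CARD('n) + 1 < \<rho>"
    using assms(3) zero_less_card_finite[where 'a = 'n] by linarith
  then interpret simplex: regular_simplex_far_points P \<rho>
    using assms(2) by unfold_locales
  have "Q = simplex.Q"
    unfolding Q_def simplex.Q_def ..
  then show ?thesis
    using simplex.card_delaunay_insert_0_diff simplex.Max_Min_del_weight_insert_0_diff
      simplex.delaunay_diff_insert_0 simplex.card_vertices simplex.del_weight_vertices
    by auto
qed

end
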